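(* For $t,a\in[0,1]$, the map $T_t\otimes\theta_a:\mathcal{M}_2\otimes\mathcal{M}_2\to\mathcal{M}_2\otimes\mathcal{M}_2$ is positive if and only if $t\le\frac{1}{2a+1}$.
   Context: For $t\in[0,1]$ the qubit depolarizing channel is $T_t(X)=(1-t)\mathrm{Tr}(X)\frac{I_2}{2}+tX$, and for $a\in[0,1]$, $\theta_a(X)=(1-a)X+aX^T$, both maps $\mathcal{M}_2\to\mathcal{M}_2$. *)

theory Defs
  imports "HOL-Analysis.Analysis"
begin

text \<open>M_2 is modelled as complex^2^2; M_2 (x) M_2 as complex^(2*2)^(2*2), where the
row index (i,k) has i the index of the first tensor factor and k that of the second.\<close>

type_synonym m2 = "complex^2^2"
type_synonym m22 = "complex^(2 \<times> 2)^(2 \<times> 2)"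

definition psd :: "complex^'n^'n \<Rightarrow> bool" where
  "psd A \<longleftrightarrow> (\<forall>v :: complex^'n.
     (let z = (\<Sum>i\<in>UNIV. \<Sum>j\<in>UNIV. cnj (v$i) * A$i$j * v$j) in Im z = 0 \<and> Re z \<ge> 0))"

definition positive_map :: "(complex^'n^'n \<Rightarrow> complex^'m^'m) \<Rightarrow> bool" where
  "positive_map \<Phi> \<longleftrightarrow> (\<forall>X. psd X \<longrightarrow> psd (\<Phi> X))"

definition depol :: "real \<Rightarrow> m2 \<Rightarrow> m2" where
  "depol t X = (\<chi> p q. complex_of_real (1 - t) * trace X * (if p = q then 1/2 else 0)
                       + complex_of_real t * X$p$q)"

definition theta :: "real \<Rightarrow> m2 \<Rightarrow> m2" where
  "theta a X = (\<chi> p q. complex_of_real (1 - a) * X$p$q + complex_of_real a * (transpose X)$p$q)"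

definition matunit :: "2 \<Rightarrow> 2 \<Rightarrow> m2" where
  "matunit i j = (\<chi> p q. if p = i \<and> q = j then 1 else 0)"

text \<open>Tensor product of two linear maps on M_2, defined by linear extension of
  (Phi (x) Psi)(E_ij (x) E_kl) = Phi(E_ij) (x) Psi(E_kl).\<close>
definition tensor_map :: "(m2 \<Rightarrow> m2) \<Rightarrow> (m2 \<Rightarrow> m2) \<Rightarrow> m22 \<Rightarrow> m22" where
  "tensor_map \<Phi> \<Psi> X = (\<chi> pr qs.
     \<Sum>i\<in>UNIV. \<Sum>j\<in>UNIV. \<Sum>k\<in>UNIV. \<Sum>l\<in>UNIV.
       X$(i,k)$(j,l) * (\<Phi> (matunit i j))$(fst pr)$(fst qs) * (\<Psi> (matunit k l))$(snd pr)$(snd qs))"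

end

theory Submission
  imports Defs
begin

text \<open>Since the quadratic form \<open>v\<^sup>* (T\<^sub>t \<otimes> \<theta>\<^sub>a)(X) v\<close> is linear in \<open>X\<close>, it equals \<open>tr (X N\<^sub>v)\<close>
  for a matrix \<open>N\<^sub>v\<close>, and the trace of a product of two psd matrices is nonnegative; so it suffices
  to check positivity on rank-one projections \<open>u u\<^sup>*\<close>. Viewing \<open>u, v\<close> as \<open>2 \<times> 2\<close> matrices
  \<open>U, V\<close>, the value \<open>v\<^sup>* (T\<^sub>t \<otimes> \<theta>\<^sub>a)(u u\<^sup>*) v\<close> is an explicit expression in \<open>S = U V\<^sup>*\<close> and
  \<open>W = U V\<^sup>T\<close>; the only possibly negative term comes from the partial transpose and is bounded below
  by \<open>-2 |det W| = -2 |det S| \<ge> -\<parallel>S\<parallel>\<^sup>2\<close>, which the depolarizing part absorbs exactly when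
  \<open>t (2a + 1) \<le> 1\<close>. Conversely, the maximally entangled projection evaluated at the singlet
  vector gives \<open>1 - t (2a + 1)\<close>.\<close>

definition qform_on :: "'n set \<Rightarrow> ('n \<Rightarrow> 'n \<Rightarrow> complex) \<Rightarrow> ('n \<Rightarrow> complex) \<Rightarrow> complex" where
  "qform_on S A v = (\<Sum>i\<in>S. \<Sum>j\<in>S. cnj (v i) * A i j * v j)"

definition psd_on :: "'n set \<Rightarrow> ('n \<Rightarrow> 'n \<Rightarrow> complex) \<Rightarrow> bool" where
  "psd_on S A \<longleftrightarrow> (\<forall>v. 0 \<le> qform_on S A v)"

lemma qform_on_cong_support:
  assumes "finite S" "T \<subseteq> S" "\<And>i. i \<in> S - T \<Longrightarrow> v i = 0"
  shows "qform_on S A v = qform_on T A v"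
proof -
  have "(\<Sum>i\<in>S. \<Sum>j\<in>S. cnj (v i) * A i j * v j) = (\<Sum>i\<in>T. \<Sum>j\<in>S. cnj (v i) * A i j * v j)"
    using assms by (intro sum.mono_neutral_right) auto
  also have "\<dots> = (\<Sum>i\<in>T. \<Sum>j\<in>T. cnj (v i) * A i j * v j)"
    using assms by (intro sum.cong refl sum.mono_neutral_right) auto
  finally show ?thesis unfolding qform_on_def .
qed

lemma qform_on_single_point:
  assumes "finite S" "p \<in> S"
  shows "qform_on S A (\<lambda>i. if i = p then x else 0) = cnj x * A p p * x"
proof -
  have "qform_on S A (\<lambda>i. if i = p then x else 0) = qform_on {p} A (\<lambda>i. if i = p then x else 0)"
    using assms by (intro qform_on_cong_support) auto
  then show ?thesis unfolding qform_on_def by simp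
qed

lemma qform_on_two_points:
  assumes "finite S" "p \<in> S" "q \<in> S" "p \<noteq> q"
  shows "qform_on S A (\<lambda>i. if i = p then x else if i = q then y else 0) =
     cnj x * A p p * x + cnj x * A p q * y + cnj y * A q p * x + cnj y * A q q * y"
proof -
  have "qform_on S A (\<lambda>i. if i = p then x else if i = q then y else 0)
      = qform_on {p, q} A (\<lambda>i. if i = p then x else if i = q then y else 0)"
    using assms by (intro qform_on_cong_support) auto
  then show ?thesis using assms unfolding qform_on_def by (simp add: algebra_simps)
qed

lemma psd_on_diag_nonneg:
  assumes "finite S" "psd_on S A" "p \<in> S"
  shows "0 \<le> A p p"
proof -
  have "0 \<le> qform_on S A (\<lambda>i. if i = p then 1 else 0)"
    using assms(2) unfolding psd_on_def by blast
  then show ?thesis using qform_on_single_point[OF assms(1,3), of A 1] by simp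
qed

lemma psd_on_hermitian:
  assumes "finite S" "psd_on S A" "p \<in> S" "q \<in> S"
  shows "A q p = cnj (A p q)"
proof (cases "p = q")
  case True
  then show ?thesis
    using psd_on_diag_nonneg[OF assms(1-3)] by (simp add: complex_eq_iff less_eq_complex_def)
next
  case False
  have form: "0 \<le> qform_on S A (\<lambda>i. if i = p then 1 else if i = q then y else 0)" for y
    using assms(2) unfolding psd_on_def by blast
  have "Im (A p p) = 0" "Im (A q q) = 0"
    using psd_on_diag_nonneg[OF assms(1,2)] assms(3,4) by (auto simp: less_eq_complex_def)
  moreover have "0 \<le> A p p + A q q + (A p q + A q p)"
    using form[of 1] qform_on_two_points[OF assms(1,3,4) False, of A 1 1] by (simp add: algebra_simps)
  moreover have "0 \<le> A p p + A q q + \<i> * (A p q - A q p)"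
    using form[of \<i>] qform_on_two_points[OF assms(1,3,4) False, of A 1 \<i>] by (simp add: algebra_simps)
  ultimately show ?thesis by (simp add: complex_eq_iff less_eq_complex_def)
qed

lemma psd_on_subset:
  assumes "finite S" "T \<subseteq> S" "psd_on S A"
  shows "psd_on T A"
  unfolding psd_on_def
proof
  fix v
  define v' :: "_ \<Rightarrow> complex" where "v' = (\<lambda>i. if i \<in> T then v i else 0)"
  have "0 \<le> qform_on S A v'"
    using assms(3) unfolding psd_on_def by blast
  also have "qform_on S A v' = qform_on T A v'"
    using assms(1,2) by (intro qform_on_cong_support) (auto simp: v'_def)
  also have "\<dots> = qform_on T A v"
    unfolding qform_on_def v'_def by (intro sum.cong refl) auto
  finally show "0 \<le> qform_on T A v" .
qed

lemma psd_on_zero_diag_imp_zero: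
  assumes "finite S" "psd_on S A" "r \<in> S" "q \<in> S" "A r r = 0"
  shows "A q r = 0"
proof (rule ccontr)
  assume nz: "A q r \<noteq> 0"
  then have "q \<noteq> r" using assms(5) by auto
  \<comment> \<open>testing the form at \<open>e\<^sub>q + c e\<^sub>r\<close> with \<open>c\<close> a large negative multiple of \<open>cnj (A q r)\<close>\<close>
  define c where "c = - complex_of_real ((Re (A q q) + 1) / (2 * (cmod (A q r))\<^sup>2)) * cnj (A q r)"
  have "A q r * c = - complex_of_real ((Re (A q q) + 1) / (2 * (cmod (A q r))\<^sup>2))
      * complex_of_real ((cmod (A q r))\<^sup>2)"
    unfolding c_def complex_norm_square by (simp add: algebra_simps)
  also have "\<dots> = - complex_of_real ((Re (A q q) + 1) / 2)"
    using nz by (simp add: field_simps)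
  finally have ec: "A q r * c = - complex_of_real ((Re (A q q) + 1) / 2)" .
  have "0 \<le> qform_on S A (\<lambda>i. if i = q then 1 else if i = r then c else 0)"
    using assms(2) unfolding psd_on_def by blast
  then have "0 \<le> A q q + A q r * c + cnj (A q r * c)"
    using qform_on_two_points[OF assms(1,4,3) \<open>q \<noteq> r\<close>, of A 1 c] assms(5)
      psd_on_hermitian[OF assms(1,2,4,3)] by (simp add: mult.commute)
  then show False unfolding ec by (simp add: less_eq_complex_def)
qed

lemma psd_on_schur_complement:
  assumes "finite S" "r \<notin> S" "psd_on (insert r S) B" "B r r \<noteq> 0"
  shows "psd_on S (\<lambda>i j. B i j - B i r * B r j / B r r)"
  unfolding psd_on_def
proof
  fix v :: "_ \<Rightarrow> complex"
  have fin: "finite (insert r S)" using assms(1) by simp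
  define \<beta> where "\<beta> = B r r"
  have "cnj \<beta> = \<beta>" "\<beta> \<noteq> 0"
    using psd_on_diag_nonneg[OF fin assms(3)] assms(4)
    by (auto simp: \<beta>_def complex_eq_iff less_eq_complex_def)
  define \<alpha> where "\<alpha> = (\<Sum>j\<in>S. B r j * v j)"
  define Q where "Q = qform_on S B v"
  define x where "x = - \<alpha> / \<beta>"
  have conj_\<alpha>: "(\<Sum>i\<in>S. cnj (v i) * B i r) = cnj \<alpha>"
    unfolding \<alpha>_def using psd_on_hermitian[OF fin assms(3), of r]
    by (simp add: mult.commute)
  have "0 \<le> qform_on (insert r S) B (\<lambda>i. if i \<in> S then v i else x)"
    using assms(3) unfolding psd_on_def by blast
  also have "qform_on (insert r S) B (\<lambda>i. if i \<in> S then v i else x)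
      = cnj x * \<beta> * x + (\<Sum>j\<in>S. cnj x * B r j * v j) + ((\<Sum>i\<in>S. cnj (v i) * B i r * x) + Q)"
    using assms(1,2) by (simp add: qform_on_def Q_def \<beta>_def sum.distrib)
  also have "(\<Sum>j\<in>S. cnj x * B r j * v j) = cnj x * \<alpha>"
    unfolding \<alpha>_def by (simp add: sum_distrib_left mult.assoc)
  also have "(\<Sum>i\<in>S. cnj (v i) * B i r * x) = cnj \<alpha> * x"
    by (simp only: sum_distrib_right[symmetric] conj_\<alpha>)
  also have "cnj x * \<beta> * x + cnj x * \<alpha> + (cnj \<alpha> * x + Q) = Q - cnj \<alpha> * \<alpha> / \<beta>"
    using \<open>cnj \<beta> = \<beta>\<close> \<open>\<beta> \<noteq> 0\<close> by (simp add: x_def field_simps)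
  also have "\<dots> = qform_on S (\<lambda>i j. B i j - B i r * B r j / B r r) v"
  proof -
    have "qform_on S (\<lambda>i j. B i j - B i r * B r j / B r r) v
        = (\<Sum>i\<in>S. \<Sum>j\<in>S. cnj (v i) * B i j * v j - (cnj (v i) * B i r / \<beta>) * (B r j * v j))"
      unfolding qform_on_def \<beta>_def by (intro sum.cong refl) (simp add: algebra_simps)
    also have "\<dots> = Q - (\<Sum>i\<in>S. cnj (v i) * B i r / \<beta> * \<alpha>)"
      unfolding Q_def qform_on_def \<alpha>_def by (simp add: sum_subtractf sum_distrib_left)
    also have "\<dots> = Q - cnj \<alpha> * \<alpha> / \<beta>"
      using conj_\<alpha> by (simp add: sum_distrib_right[symmetric] sum_divide_distrib[symmetric])
    finally show ?thesis by simp
  qed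
  finally show "0 \<le> qform_on S (\<lambda>i j. B i j - B i r * B r j / B r r) v" .
qed

lemma complex_divide_nonneg: "0 \<le> x \<Longrightarrow> 0 \<le> b \<Longrightarrow> 0 \<le> (x / b :: complex)"
  by (simp add: less_eq_complex_def Re_divide Im_divide)

text \<open>Induction on the index set: a zero pivot of \<open>B\<close> kills its row and column, and otherwise
  \<open>B\<close> is the Schur complement plus the rank-one matrix \<open>b b\<^sup>* / \<beta>\<close>, whose contribution
  is the form of \<open>A\<close> at \<open>b\<close>.\<close>
lemma psd_on_trace_mult_nonneg:
  "finite S \<Longrightarrow> psd_on S A \<Longrightarrow> psd_on S B \<Longrightarrow> 0 \<le> (\<Sum>p\<in>S. \<Sum>q\<in>S. A p q * B q p)"
proof (induction S arbitrary: A B rule: finite_induct)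
  case empty
  then show ?case by simp
next
  case (insert r S)
  have fin: "finite (insert r S)" using insert.hyps by simp
  have A_S: "psd_on S A" using psd_on_subset[OF fin subset_insertI insert.prems(1)] .
  have herm: "B r p = cnj (B p r)" if "p \<in> insert r S" for p
    using psd_on_hermitian[OF fin insert.prems(2) that, of r] by simp
  show ?case
  proof (cases "B r r = 0")
    case True
    have col: "B q r = 0" and row: "B r q = 0" if "q \<in> insert r S" for q
      using psd_on_zero_diag_imp_zero[OF fin insert.prems(2) _ that True] herm[OF that] by simp_all
    have "(\<Sum>p\<in>insert r S. \<Sum>q\<in>insert r S. A p q * B q p) = (\<Sum>p\<in>S. \<Sum>q\<in>S. A p q * B q p)"
      using insert.hyps col row by (simp add: sum.insert)
    then show ?thesis
      using insert.IH[OF A_S psd_on_subset[OF fin subset_insertI insert.prems(2)]] by simp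
  next
    case False
    define B' where "B' = (\<lambda>i j. B i j - B i r * B r j / B r r)"
    have decomp: "(\<Sum>p\<in>insert r S. \<Sum>q\<in>insert r S. A p q * B q p)
        = (\<Sum>p\<in>S. \<Sum>q\<in>S. A p q * B' q p) + qform_on (insert r S) A (\<lambda>i. B i r) / B r r"
    proof -
      have "(\<Sum>p\<in>insert r S. \<Sum>q\<in>insert r S. A p q * B q p)
          = (\<Sum>p\<in>insert r S. \<Sum>q\<in>insert r S. A p q * B' q p + A p q * (B q r * B r p) / B r r)"
        unfolding B'_def using False by (intro sum.cong refl) (simp add: field_simps)
      also have "\<dots> = (\<Sum>p\<in>insert r S. \<Sum>q\<in>insert r S. A p q * B' q p)
          + (\<Sum>p\<in>insert r S. \<Sum>q\<in>insert r S. A p q * (B q r * B r p)) / B r r"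
        by (simp add: sum.distrib sum_divide_distrib)
      also have "(\<Sum>p\<in>insert r S. \<Sum>q\<in>insert r S. A p q * B' q p) = (\<Sum>p\<in>S. \<Sum>q\<in>S. A p q * B' q p)"
        using insert.hyps False by (simp add: B'_def)
      also have "(\<Sum>p\<in>insert r S. \<Sum>q\<in>insert r S. A p q * (B q r * B r p)) = qform_on (insert r S) A (\<lambda>i. B i r)"
        unfolding qform_on_def by (intro sum.cong refl) (simp add: herm algebra_simps)
      finally show ?thesis .
    qed
    have "0 \<le> (\<Sum>p\<in>S. \<Sum>q\<in>S. A p q * B' q p)"
      using insert.IH[OF A_S] psd_on_schur_complement[OF insert.hyps insert.prems(2) False]
      unfolding B'_def by blast
    moreover have "0 \<le> qform_on (insert r S) A (\<lambda>i. B i r) / B r r"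
      using insert.prems psd_on_diag_nonneg[OF fin insert.prems(2)]
      by (intro complex_divide_nonneg) (auto simp: psd_on_def)
    ultimately show ?thesis unfolding decomp by (rule add_nonneg_nonneg)
  qed
qed

definition qform :: "complex^'n^'n \<Rightarrow> complex^'n \<Rightarrow> complex" where
  "qform A v = (\<Sum>i\<in>UNIV. \<Sum>j\<in>UNIV. cnj (v$i) * A$i$j * v$j)"

lemma psd_iff_qform_nonneg: "psd A \<longleftrightarrow> (\<forall>v. 0 \<le> qform A v)"
  by (auto simp: psd_def qform_def Let_def less_eq_complex_def)

lemma psd_imp_psd_on:
  fixes A :: "complex^'n^'n"
  shows "psd A \<Longrightarrow> psd_on UNIV (\<lambda>i j. A$i$j)"
  unfolding psd_iff_qform_nonneg psd_on_def
proof
  fix v :: "'n \<Rightarrow> complex"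
  assume "\<forall>v. 0 \<le> qform A v"
  then have "0 \<le> qform A (\<chi> i. v i)" ..
  then show "0 \<le> qform_on UNIV (\<lambda>i j. A$i$j) v" by (simp add: qform_def qform_on_def)
qed

definition outer :: "complex^'n \<Rightarrow> complex^'n^'n" where
  "outer u = (\<chi> p q. u$p * cnj (u$q))"

lemma psd_outer:
  fixes u :: "complex^'n"
  shows "psd (outer u)"
  unfolding psd_iff_qform_nonneg
proof
  fix v :: "complex^'n"
  define z where "z = (\<Sum>i\<in>UNIV. cnj (v$i) * u$i)"
  have "qform (outer u) v = z * cnj z"
    by (simp add: qform_def outer_def z_def sum_product mult_ac)
  also have "\<dots> = complex_of_real ((cmod z)\<^sup>2)"
    by (rule complex_norm_square[symmetric])
  finally show "0 \<le> qform (outer u) v" by (simp add: less_eq_complex_def)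
qed

lemma positive_map_if_rank_one:
  fixes \<Phi> :: "complex^'n^'n \<Rightarrow> complex^'m^'m" and \<kappa> :: "complex^'m \<Rightarrow> 'n \<Rightarrow> 'n \<Rightarrow> complex"
  assumes form_linear: "\<And>X v. qform (\<Phi> X) v = (\<Sum>p\<in>UNIV. \<Sum>q\<in>UNIV. X$p$q * \<kappa> v p q)"
    and rank_one: "\<And>u v. 0 \<le> qform (\<Phi> (outer u)) v"
  shows "positive_map \<Phi>"
  unfolding positive_map_def psd_iff_qform_nonneg
proof (intro allI impI)
  fix X :: "complex^'n^'n" and v :: "complex^'m"
  assume "\<forall>w. 0 \<le> qform X w"
  then have X: "psd_on UNIV (\<lambda>i j. X$i$j)"
    by (intro psd_imp_psd_on) (simp add: psd_iff_qform_nonneg)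
  have N: "psd_on UNIV (\<lambda>q p. \<kappa> v p q)"
    unfolding psd_on_def
  proof
    fix u :: "'n \<Rightarrow> complex"
    have "qform_on UNIV (\<lambda>q p. \<kappa> v p q) u = qform (\<Phi> (outer (\<chi> i. u i))) v"
      unfolding form_linear qform_on_def outer_def by (subst sum.swap) (simp add: mult_ac)
    then show "0 \<le> qform_on UNIV (\<lambda>q p. \<kappa> v p q) u" using rank_one by simp
  qed
  show "0 \<le> qform (\<Phi> X) v"
    unfolding form_linear using psd_on_trace_mult_nonneg[OF finite X N] .
qed

definition kron :: "complex^'a^'a \<Rightarrow> complex^'b^'b \<Rightarrow> complex^('a \<times> 'b)^('a \<times> 'b)" where
  "kron A B = (\<chi> r s. A$fst r$fst s * B$snd r$snd s)"

lemma sum_UNIV_2x2: "sum f (UNIV :: (2 \<times> 2) set) = f (1,1) + f (1,2) + f (2,1) + f (2,2)"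
proof -
  have "sum f (UNIV :: (2 \<times> 2) set) = (\<Sum>i\<in>(UNIV :: 2 set). \<Sum>k\<in>(UNIV :: 2 set). f (i,k))"
    by (simp add: sum.cartesian_product)
  then show ?thesis by (simp add: sum_2 add.assoc)
qed

lemma qform_tensor_map:
  "qform (tensor_map \<Phi> \<Psi> X) v = (\<Sum>p\<in>UNIV. \<Sum>q\<in>UNIV.
     X$p$q * qform (kron (\<Phi> (matunit (fst p) (fst q))) (\<Psi> (matunit (snd p) (snd q)))) v)"
  unfolding qform_def kron_def tensor_map_def
  by (simp add: sum_UNIV_2x2 sum_2 algebra_simps)

lemma depol_matunit:
  "depol t (matunit i j) $ p $ q = complex_of_real (1 - t) * (if i = j \<and> p = q then 1/2 else 0)
     + complex_of_real t * (if p = i \<and> q = j then 1 else 0)"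
  using exhaust_2[of j] by (auto simp: depol_def matunit_def trace_def sum_2)

lemma theta_matunit:
  "theta a (matunit k l) $ p $ q = complex_of_real (1 - a) * (if p = k \<and> q = l then 1 else 0)
     + complex_of_real a * (if p = l \<and> q = k then 1 else 0)"
  by (auto simp: theta_def matunit_def transpose_def)

text \<open>Reading \<open>u, v \<in> \<complex>\<^sup>2 \<otimes> \<complex>\<^sup>2\<close> as \<open>2 \<times> 2\<close> matrices \<open>U, V\<close> (first tensor index = row),
  these are the entries of \<open>U V\<^sup>*\<close> and \<open>U V\<^sup>T\<close>.\<close>
definition mult_adj :: "complex^(2 \<times> 2) \<Rightarrow> complex^(2 \<times> 2) \<Rightarrow> 2 \<Rightarrow> 2 \<Rightarrow> complex" where
  "mult_adj u v i j = (\<Sum>k\<in>UNIV. u$(i,k) * cnj (v$(j,k)))"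

definition mult_transp :: "complex^(2 \<times> 2) \<Rightarrow> complex^(2 \<times> 2) \<Rightarrow> 2 \<Rightarrow> 2 \<Rightarrow> complex" where
  "mult_transp u v i j = (\<Sum>k\<in>UNIV. u$(i,k) * v$(j,k))"

definition hs_norm2 :: "(2 \<Rightarrow> 2 \<Rightarrow> complex) \<Rightarrow> real" where
  "hs_norm2 M = (\<Sum>i\<in>UNIV. \<Sum>j\<in>UNIV. (cmod (M i j))\<^sup>2)"

definition det2 :: "(2 \<Rightarrow> 2 \<Rightarrow> complex) \<Rightarrow> complex" where
  "det2 M = M 1 1 * M 2 2 - M 1 2 * M 2 1"

text \<open>The value at \<open>v\<close> of the partial transpose of \<open>u u\<^sup>*\<close>, in terms of \<open>W = U V\<^sup>T\<close>.\<close>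
definition partial_transpose_term :: "(2 \<Rightarrow> 2 \<Rightarrow> complex) \<Rightarrow> real" where
  "partial_transpose_term W = (cmod (W 1 1))\<^sup>2 + (cmod (W 2 2))\<^sup>2 + 2 * Re (W 1 2 * cnj (W 2 1))"

definition rank_one_value :: "real \<Rightarrow> real \<Rightarrow> complex^(2 \<times> 2) \<Rightarrow> complex^(2 \<times> 2) \<Rightarrow> real" where
  "rank_one_value t a u v = (let S = mult_adj u v; W = mult_transp u v in
     t * (1 - a) * (cmod (S 1 1 + S 2 2))\<^sup>2 + t * a * partial_transpose_term W
     + (1 - t) / 2 * ((1 - a) * hs_norm2 S + a * hs_norm2 W))"

lemma of_real_hs_norm2: "complex_of_real (hs_norm2 M) = (\<Sum>i\<in>UNIV. \<Sum>j\<in>UNIV. M i j * cnj (M i j))"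
  by (simp only: hs_norm2_def of_real_sum complex_norm_square)

lemma of_real_partial_transpose_term:
  "complex_of_real (partial_transpose_term W) = W 1 1 * cnj (W 1 1) + W 2 2 * cnj (W 2 2)
     + (W 1 2 * cnj (W 2 1) + cnj (W 1 2 * cnj (W 2 1)))"
  by (simp only: partial_transpose_term_def of_real_add complex_norm_square complex_add_cnj)

lemma qform_depol_theta_outer:
  "qform (tensor_map (depol t) (theta a) (outer u)) v = complex_of_real (rank_one_value t a u v)"
proof -
  have "complex_of_real (rank_one_value t a u v) =
    (let S = mult_adj u v; W = mult_transp u v in
     of_real t * (1 - of_real a) * ((S 1 1 + S 2 2) * cnj (S 1 1 + S 2 2))
     + of_real t * of_real a * complex_of_real (partial_transpose_term W)
     + (1 - of_real t) / 2 * ((1 - of_real a) * complex_of_real (hs_norm2 S)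
        + of_real a * complex_of_real (hs_norm2 W)))"
    by (simp add: rank_one_value_def Let_def complex_norm_square del: of_real_power)
  then show ?thesis
    unfolding qform_tensor_map of_real_partial_transpose_term of_real_hs_norm2 Let_def
    by (simp add: sum_UNIV_2x2 sum_2 qform_def kron_def outer_def depol_matunit theta_matunit
        mult_adj_def mult_transp_def) (simp add: field_simps)
qed

lemma two_mult_cmod_le: "2 * (cmod x * cmod y) \<le> (cmod x)\<^sup>2 + (cmod y)\<^sup>2"
  using sum_squares_bound[of "cmod x" "cmod y"] by (simp add: mult.assoc)

lemma Re_mult_cnj_ge: "- (cmod x * cmod y) \<le> Re (x * cnj y)"
  using abs_Re_le_cmod[of "x * cnj y"] by (simp add: norm_mult)

lemma hs_norm2_nonneg: "0 \<le> hs_norm2 M"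
  by (simp add: hs_norm2_def sum_nonneg)

lemma two_cmod_det2_le_hs_norm2: "2 * cmod (det2 M) \<le> hs_norm2 M"
proof -
  have "cmod (det2 M) \<le> cmod (M 1 1) * cmod (M 2 2) + cmod (M 1 2) * cmod (M 2 1)"
    unfolding det2_def using norm_triangle_ineq4[of "M 1 1 * M 2 2" "M 1 2 * M 2 1"]
    by (simp add: norm_mult)
  then show ?thesis
    using two_mult_cmod_le[of "M 1 1" "M 2 2"] two_mult_cmod_le[of "M 1 2" "M 2 1"]
    by (simp add: hs_norm2_def sum_2)
qed

text \<open>Both determinants have modulus \<open>|det U| |det V|\<close>.\<close>
lemma cmod_det2_mult_adj: "cmod (det2 (mult_adj u v)) = cmod (det2 (mult_transp u v))"
proof -
  define dU where "dU = u$(1,1) * u$(2,2) - u$(1,2) * u$(2,1)"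
  define dV where "dV = v$(1,1) * v$(2,2) - v$(1,2) * v$(2,1)"
  have "det2 (mult_adj u v) = dU * cnj dV" "det2 (mult_transp u v) = dU * dV"
    unfolding det2_def mult_adj_def mult_transp_def dU_def dV_def by (simp_all add: sum_2 algebra_simps)
  then show ?thesis by (simp add: norm_mult)
qed

lemma partial_transpose_term_ge: "- 2 * cmod (det2 W) \<le> partial_transpose_term W"
proof -
  have "cmod (W 1 2) * cmod (W 2 1) - cmod (W 1 1) * cmod (W 2 2) \<le> cmod (det2 W)"
    unfolding det2_def using norm_triangle_ineq3[of "W 1 2 * W 2 1" "W 1 1 * W 2 2"]
    by (simp add: norm_mult norm_minus_commute)
  then show ?thesis
    using two_mult_cmod_le[of "W 1 1" "W 2 2"] Re_mult_cnj_ge[of "W 1 2" "W 2 1"]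
    unfolding partial_transpose_term_def by linarith
qed

lemma partial_transpose_term_add_hs_norm2_nonneg: "0 \<le> partial_transpose_term W + hs_norm2 W"
  using two_mult_cmod_le[of "W 1 2" "W 2 1"] Re_mult_cnj_ge[of "W 1 2" "W 2 1"]
  unfolding partial_transpose_term_def hs_norm2_def by (simp add: sum_2)

lemma rank_one_value_nonneg:
  assumes "0 \<le> t" "0 \<le> a" "a \<le> 1" "t * (2 * a + 1) \<le> 1"
  shows "0 \<le> rank_one_value t a u v"
proof -
  define S W where "S = mult_adj u v" and "W = mult_transp u v"
  define P where "P = partial_transpose_term W"
  define N where "N = (1 - a) * hs_norm2 S + a * hs_norm2 W"
  have "0 \<le> P + hs_norm2 S"
    using two_cmod_det2_le_hs_norm2[of S] partial_transpose_term_ge[of W] cmod_det2_mult_adj[of u v]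
    unfolding P_def S_def W_def by linarith
  moreover have "0 \<le> P + hs_norm2 W"
    using partial_transpose_term_add_hs_norm2_nonneg unfolding P_def .
  ultimately have "0 \<le> t * a * ((1 - a) * (P + hs_norm2 S) + a * (P + hs_norm2 W))"
    using assms by simp
  moreover have "0 \<le> ((1 - t) / 2 - a * t) * N"
    using assms hs_norm2_nonneg[of S] hs_norm2_nonneg[of W] unfolding N_def
    by (intro mult_nonneg_nonneg add_nonneg_nonneg) (simp_all add: algebra_simps)
  moreover have "0 \<le> t * (1 - a) * (cmod (S 1 1 + S 2 2))\<^sup>2"
    using assms by simp
  moreover have "rank_one_value t a u v = t * (1 - a) * (cmod (S 1 1 + S 2 2))\<^sup>2
      + t * a * ((1 - a) * (P + hs_norm2 S) + a * (P + hs_norm2 W)) + ((1 - t) / 2 - a * t) * N"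
    unfolding rank_one_value_def S_def W_def P_def N_def Let_def by (simp add: algebra_simps)
  ultimately show ?thesis by linarith
qed

definition max_entangled :: "complex^(2 \<times> 2)" where
  "max_entangled = (\<chi> p. if fst p = snd p then 1 else 0)"

definition singlet :: "complex^(2 \<times> 2)" where
  "singlet = (\<chi> p. if p = (1, 2) then 1 else if p = (2, 1) then -1 else 0)"

lemma rank_one_value_max_entangled_singlet:
  "rank_one_value t a max_entangled singlet = 1 - t * (2 * a + 1)"
  by (simp add: rank_one_value_def partial_transpose_term_def hs_norm2_def mult_adj_def
      mult_transp_def max_entangled_def singlet_def sum_2 algebra_simps)

theorem mainTheorem16:
  fixes t a :: real
  assumes "0 \<le> t" "t \<le> 1" "0 \<le> a" "a \<le> 1"
  shows "positive_map (tensor_map (depol t) (theta a)) \<longleftrightarrow> t \<le> 1 / (2 * a + 1)"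
proof
  assume "positive_map (tensor_map (depol t) (theta a))"
  then have "0 \<le> qform (tensor_map (depol t) (theta a) (outer max_entangled)) singlet"
    using psd_outer unfolding positive_map_def psd_iff_qform_nonneg by blast
  then have "0 \<le> 1 - t * (2 * a + 1)"
    by (simp add: qform_depol_theta_outer rank_one_value_max_entangled_singlet less_eq_complex_def)
  then show "t \<le> 1 / (2 * a + 1)"
    using assms by (simp add: field_simps)
next
  assume "t \<le> 1 / (2 * a + 1)"
  then have "t * (2 * a + 1) \<le> 1"
    using assms by (simp add: field_simps)
  then show "positive_map (tensor_map (depol t) (theta a))"
    using assms rank_one_value_nonneg
    by (intro positive_map_if_rank_one[OF qform_tensor_map])
      (simp add: qform_depol_theta_outer less_eq_complex_def)
qed

end
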